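(* Let $f=(f_1,f_2):\mathbb{R}\times\mathbb{R}^2,\mathbf 0\to\mathbb{R}^2,\mathbf 0$ be an analytic germ, $f_t(x)=f(t,x)$, $J=\partial(f_1,f_2)/\partial(x_1,x_2)$, $F_i=\partial(f_i,J)/\partial(x_1,x_2)$, and assume $$\dim_{\mathbb{R}}\mathcal{O}_3/\langle t,f_1,f_2\rangle<\infty,\ \dim_{\mathbb{R}}\mathcal{O}_3/\langle t,F_1,F_2\rangle<\infty,\ J(\mathbf{0})=0,\ \dim_{\mathbb{R}}\mathcal{O}_3/\langle t,\partial J/\partial x_1,\partial J/\partial x_2\rangle<\infty,$$ and that $V(I')=\{\mathbf 0\}$, where $I'=\langle J,F_1,F_2,\partial(F_1,J)/\partial(x_1,x_2),\partial(F_2,J)/\partial(x_1,x_2)\rangle$. Let $r_0>0$ with $f_0^{-1}(\mathbf 0)\cap D^2(r_0)=\{\mathbf 0\}$, $\tilde D^2_t(\delta)=f_t^{-1}(D^2(\delta))\cap D^2(r_0)$, let $V(I)$ be a representative of the zero germ of $I=\langle J,F_1,F_2\rangle$, and $\Sigma_t=\{x\in\tilde D^2_t(\delta):(t,x)\in V(I)\}$. Suppose $0<\delta\ll1$ and $t\neq0$ is sufficiently close to zero. Then the set of critical points of $f_t:\tilde D^2_t(\delta)\to D^2(\delta)$ consists of fold points and the finite family $\Sigma_t$ of cusp points.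
   Context: $\mathcal{O}_3=\mathbb{R}\{t,x_1,x_2\}$; $V(\cdot)$ denotes real zero sets near the origin. $D^2(\rho)$ is the closed disc of radius $\rho$. Fold and cusp points are in Whitney's sense. *)

theory Defs
  imports "HOL-Analysis.Analysis"
begin

text \<open>Functions of (t, x1, x2) are represented curried: real => real => real => real.
  Real-analyticity at a point: a convergent (unconditionally = absolutely summable)
  triple power series representing the function on a neighbourhood.\<close>

definition analytic_at :: "real \<times> real \<times> real \<Rightarrow> (real \<Rightarrow> real \<Rightarrow> real \<Rightarrow> real) \<Rightarrow> bool" where
  "analytic_at p g \<longleftrightarrow> (case p of (t0, a0, b0) \<Rightarrow>
     (\<exists>r>0. \<exists>c :: nat \<times> nat \<times> nat \<Rightarrow> real.
        \<forall>t a b. \<bar>t - t0\<bar> < r \<and> \<bar>a - a0\<bar> < r \<and> \<bar>b - b0\<bar> < r \<longrightarrow>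
          ((\<lambda>(i, j, k). c (i, j, k) * (t - t0) ^ i * (a - a0) ^ j * (b - b0) ^ k)
             has_sum g t a b) UNIV))"

text \<open>Representatives of elements of O_3 = R{t,x1,x2}: functions analytic at the origin.\<close>
definition analytic0 :: "(real \<Rightarrow> real \<Rightarrow> real \<Rightarrow> real) \<Rightarrow> bool" where
  "analytic0 g \<longleftrightarrow> analytic_at (0, 0, 0) g"

definition near0 :: "(real \<Rightarrow> real \<Rightarrow> real \<Rightarrow> bool) \<Rightarrow> bool" where
  "near0 P \<longleftrightarrow> (\<exists>e>0. \<forall>t a b. \<bar>t\<bar> < e \<and> \<bar>a\<bar> < e \<and> \<bar>b\<bar> < e \<longrightarrow> P t a b)"

definition tcoord :: "real \<Rightarrow> real \<Rightarrow> real \<Rightarrow> real" where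
  "tcoord = (\<lambda>t a b. t)"

definition in_ideal :: "(real \<Rightarrow> real \<Rightarrow> real \<Rightarrow> real) list \<Rightarrow> (real \<Rightarrow> real \<Rightarrow> real \<Rightarrow> real) \<Rightarrow> bool" where
  "in_ideal gs g \<longleftrightarrow> (\<exists>as. length as = length gs \<and> (\<forall>h\<in>set as. analytic0 h) \<and>
     near0 (\<lambda>t a b. g t a b = (\<Sum>i<length gs. (as ! i) t a b * (gs ! i) t a b)))"

text \<open>dim_R O_3 / <gs> < infinity: finitely many germs span O_3 modulo the ideal.\<close>
definition finite_codim :: "(real \<Rightarrow> real \<Rightarrow> real \<Rightarrow> real) list \<Rightarrow> bool" where
  "finite_codim gs \<longleftrightarrow> (\<exists>es. (\<forall>e\<in>set es. analytic0 e) \<and>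
     (\<forall>g. analytic0 g \<longrightarrow> (\<exists>c :: nat \<Rightarrow> real.
        in_ideal gs (\<lambda>t a b. g t a b - (\<Sum>j<length es. c j * (es ! j) t a b)))))"

definition zero_set_is_origin :: "(real \<Rightarrow> real \<Rightarrow> real \<Rightarrow> real) list \<Rightarrow> bool" where
  "zero_set_is_origin gs \<longleftrightarrow> near0 (\<lambda>t a b. (\<forall>g\<in>set gs. g t a b = 0) \<longleftrightarrow> (t = 0 \<and> a = 0 \<and> b = 0))"

definition zero_set_rep :: "(real \<Rightarrow> real \<Rightarrow> real \<Rightarrow> real) list \<Rightarrow> (real \<times> real \<times> real) set \<Rightarrow> bool" where
  "zero_set_rep gs W \<longleftrightarrow> near0 (\<lambda>t a b. (t, a, b) \<in> W \<longleftrightarrow> (\<forall>g\<in>set gs. g t a b = 0))"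

definition dx1 :: "(real \<Rightarrow> real \<Rightarrow> real) \<Rightarrow> real \<Rightarrow> real \<Rightarrow> real" where
  "dx1 g a b = deriv (\<lambda>s. g s b) a"

definition dx2 :: "(real \<Rightarrow> real \<Rightarrow> real) \<Rightarrow> real \<Rightarrow> real \<Rightarrow> real" where
  "dx2 g a b = deriv (\<lambda>s. g a s) b"

definition jac2 :: "(real \<Rightarrow> real \<Rightarrow> real) \<Rightarrow> (real \<Rightarrow> real \<Rightarrow> real) \<Rightarrow> real \<Rightarrow> real \<Rightarrow> real" where
  "jac2 g h a b = dx1 g a b * dx2 h a b - dx2 g a b * dx1 h a b"

definition jacx :: "(real \<Rightarrow> real \<Rightarrow> real \<Rightarrow> real) \<Rightarrow> (real \<Rightarrow> real \<Rightarrow> real \<Rightarrow> real) \<Rightarrow> real \<Rightarrow> real \<Rightarrow> real \<Rightarrow> real" where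
  "jacx g h t = jac2 (g t) (h t)"

definition dxt1 :: "(real \<Rightarrow> real \<Rightarrow> real \<Rightarrow> real) \<Rightarrow> real \<Rightarrow> real \<Rightarrow> real \<Rightarrow> real" where
  "dxt1 g t = dx1 (g t)"

definition dxt2 :: "(real \<Rightarrow> real \<Rightarrow> real \<Rightarrow> real) \<Rightarrow> real \<Rightarrow> real \<Rightarrow> real \<Rightarrow> real" where
  "dxt2 g t = dx2 (g t)"

text \<open>Whitney's fold and cusp points of a plane map (g1,g2): R^2 -> R^2, with
  J = d(g1,g2)/d(x1,x2) and G_i = d(g_i,J)/d(x1,x2) (derivative of g_i along the
  critical curve J = 0):
  fold: J = 0, grad J /= 0, (G1,G2) /= 0;
  cusp: J = 0, grad J /= 0, G1 = G2 = 0, (d(G1,J)/d(x), d(G2,J)/d(x)) /= 0.\<close>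
definition fold_point :: "(real \<Rightarrow> real \<Rightarrow> real) \<Rightarrow> (real \<Rightarrow> real \<Rightarrow> real) \<Rightarrow> real \<times> real \<Rightarrow> bool" where
  "fold_point g1 g2 p \<longleftrightarrow> (case p of (a, b) \<Rightarrow>
     (let J = jac2 g1 g2 in
      J a b = 0 \<and> (dx1 J a b, dx2 J a b) \<noteq> (0, 0) \<and>
      (jac2 g1 J a b, jac2 g2 J a b) \<noteq> (0, 0)))"

definition cusp_point :: "(real \<Rightarrow> real \<Rightarrow> real) \<Rightarrow> (real \<Rightarrow> real \<Rightarrow> real) \<Rightarrow> real \<times> real \<Rightarrow> bool" where
  "cusp_point g1 g2 p \<longleftrightarrow> (case p of (a, b) \<Rightarrow>
     (let J = jac2 g1 g2 in
      J a b = 0 \<and> (dx1 J a b, dx2 J a b) \<noteq> (0, 0) \<and>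
      jac2 g1 J a b = 0 \<and> jac2 g2 J a b = 0 \<and>
      (jac2 (jac2 g1 J) J a b, jac2 (jac2 g2 J) J a b) \<noteq> (0, 0)))"

definition disc2 :: "real \<Rightarrow> (real \<times> real) set" where
  "disc2 r = {(a, b). a\<^sup>2 + b\<^sup>2 \<le> r\<^sup>2}"

definition tilde_disc :: "(real \<Rightarrow> real \<Rightarrow> real \<Rightarrow> real) \<Rightarrow> (real \<Rightarrow> real \<Rightarrow> real \<Rightarrow> real) \<Rightarrow>
    real \<Rightarrow> real \<Rightarrow> real \<Rightarrow> (real \<times> real) set" where
  "tilde_disc f1 f2 r0 \<delta> t = {(a, b). (f1 t a b, f2 t a b) \<in> disc2 \<delta>} \<inter> disc2 r0"

text \<open>Critical points of f_t restricted to a set S: points where the differential of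
  the plane map is not surjective, i.e. the Jacobian determinant vanishes.\<close>
definition critical_set :: "(real \<Rightarrow> real \<Rightarrow> real) \<Rightarrow> (real \<Rightarrow> real \<Rightarrow> real) \<Rightarrow> (real \<times> real) set \<Rightarrow> (real \<times> real) set" where
  "critical_set g1 g2 S = {(a, b) \<in> S. jac2 g1 g2 a b = 0}"

end

theory Submission
  imports Defs
begin

text \<open>For t \<noteq> 0 close to 0 the slice of V(I') near the origin is empty. Hence at a critical
  point of f_t one of F_1, F_2, d(F_i,J)/d(x_1,x_2) is nonzero; since all of these vanish when
  grad J = 0, the critical point is a fold or a cusp, and the cusps are exactly the common zeros
  of J, F_1, F_2. At a cusp some d(F_i,J)/d(x_1,x_2) is nonzero, so the map (J, F_i) has an
  injective differential there and the cusp is an isolated point of V(I); a compact set of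
  isolated points is finite. Finally, f_0 does not vanish on the annulus between a small circle
  and the circle of radius r_0, so for small \<delta> and t the set f_t^-1(D^2(\<delta>)) \<inter> D^2(r_0)
  lies in a small disc, on which every slice f_t is a convergent power series and hence smooth.\<close>

section \<open>Absolutely convergent double power series\<close>

definition decode_triple :: "nat \<Rightarrow> nat \<times> nat \<times> nat" where
  "decode_triple = map_prod id prod_decode \<circ> prod_decode"

lemma bij_decode_triple: "bij decode_triple"
  unfolding decode_triple_def
  using bij_betw_map_prod[OF bij_id bij_prod_decode] bij_prod_decode
  by (intro bij_comp) simp_all

lemma has_sum_triple_decode:
  fixes F :: "nat \<times> nat \<times> nat \<Rightarrow> real"
  assumes "(F has_sum S) UNIV"
  shows "(\<lambda>n. F (decode_triple n)) sums S" "summable (\<lambda>n. \<bar>F (decode_triple n)\<bar>)"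
proof -
  have hs: "((\<lambda>n. F (decode_triple n)) has_sum S) UNIV"
    using assms has_sum_reindex_bij_betw[OF bij_decode_triple] by blast
  then show "(\<lambda>n. F (decode_triple n)) sums S" by (rule has_sum_imp_sums)
  from hs have "(\<lambda>n. F (decode_triple n)) summable_on UNIV" by (rule has_sum_imp_summable)
  then have "(\<lambda>n. norm (F (decode_triple n))) summable_on UNIV"
    by (simp only: summable_on_iff_abs_summable_on_real[symmetric])
  then have "summable (\<lambda>n. norm (F (decode_triple n)))" by (rule summable_on_imp_summable)
  then show "summable (\<lambda>n. \<bar>F (decode_triple n)\<bar>)" by simp
qed

lemma of_nat_mult_power_le_geometric:
  fixes q s :: real
  assumes "0 \<le> q" "q < s"
  obtains C where "\<And>n x. \<bar>x\<bar> \<le> q \<Longrightarrow> real n * \<bar>x\<bar>^(n-1) \<le> C * s^n"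
proof -
  define q1 where "q1 = (q+s)/2"
  have q1: "0 < q1" "q \<le> q1" "q1 < s" using assms by (auto simp: q1_def)
  define h where "h = s/q1 - 1"
  have h: "h > 0" using q1 by (simp add: h_def)
  have n_q1: "real n * q1^n \<le> s^n / h" for n
  proof -
    have "1 + real n * h \<le> (1+h)^n" by (rule Bernoulli_inequality) (use h in auto)
    also have "1 + h = s / q1" by (simp add: h_def)
    finally have "real n * h * q1^n \<le> (s/q1)^n * q1^n"
      using q1 by (intro mult_right_mono) auto
    also have "(s/q1)^n * q1^n = s^n" using q1 by (simp add: power_divide)
    finally show ?thesis using h by (simp add: field_simps)
  qed
  have "real n * \<bar>x\<bar>^(n-1) \<le> (1/(h*q1)) * s^n" if x: "\<bar>x\<bar> \<le> q" for n x
  proof (cases n)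
    case 0 then show ?thesis using h q1 by simp
  next
    case (Suc m)
    have "real n * \<bar>x\<bar>^(n-1) \<le> real n * q1^(n-1)"
      using x q1 by (intro mult_left_mono power_mono) auto
    also have "\<dots> = real n * q1^n / q1" using Suc q1 by simp
    also have "\<dots> \<le> (s^n / h) / q1" using n_q1[of n] q1 by (intro divide_right_mono) auto
    finally show ?thesis by simp
  qed
  then show ?thesis by (rule that)
qed

text \<open>The monomials are enumerated by a single index n, with coefficient w n and exponents
  i n, j n; every slice of a triple power series has this form.\<close>

definition double_powser_on :: "real \<Rightarrow> (real \<Rightarrow> real \<Rightarrow> real) \<Rightarrow> bool" where
  "double_powser_on R g \<longleftrightarrow> (\<exists>(w::nat \<Rightarrow> real) (i::nat \<Rightarrow> nat) (j::nat \<Rightarrow> nat).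
     \<forall>a b. \<bar>a\<bar> < R \<and> \<bar>b\<bar> < R \<longrightarrow>
       summable (\<lambda>n. \<bar>w n * a^i n * b^j n\<bar>) \<and> (\<lambda>n. w n * a^i n * b^j n) sums g a b)"

lemma double_powser_on_mono: "double_powser_on R g \<Longrightarrow> R' \<le> R \<Longrightarrow> double_powser_on R' g"
  unfolding double_powser_on_def by (meson less_le_trans)

lemma double_powser_on_swap:
  assumes "double_powser_on R g"
  shows "double_powser_on R (\<lambda>a b. g b a)"
proof -
  obtain w i j where series: "\<forall>a b. \<bar>a\<bar> < R \<and> \<bar>b\<bar> < R \<longrightarrow>
      summable (\<lambda>n. \<bar>w n * a^i n * b^j n\<bar>) \<and> (\<lambda>n. w n * a^i n * b^j n) sums g a b"
    using assms unfolding double_powser_on_def by blast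
  then have abs_summ: "\<And>a b. \<bar>a\<bar> < R \<Longrightarrow> \<bar>b\<bar> < R \<Longrightarrow> summable (\<lambda>n. \<bar>w n * a^i n * b^j n\<bar>)"
    and sums_g: "\<And>a b. \<bar>a\<bar> < R \<Longrightarrow> \<bar>b\<bar> < R \<Longrightarrow> (\<lambda>n. w n * a^i n * b^j n) sums g a b"
    by blast+
  have "summable (\<lambda>n. \<bar>w n * a^j n * b^i n\<bar>) \<and> (\<lambda>n. w n * a^j n * b^i n) sums g b a"
    if "\<bar>a\<bar> < R" "\<bar>b\<bar> < R" for a b
    using abs_summ[OF that(2,1)] sums_g[OF that(2,1)] by (simp add: mult_ac)
  then show ?thesis unfolding double_powser_on_def by blast
qed

lemma monomial_series_deriv_dominated:
  fixes w :: "nat \<Rightarrow> real" and i j :: "nat \<Rightarrow> nat"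
  assumes qs: "0 \<le> q" "q < s"
  obtains C where "\<And>n x. \<bar>x\<bar> \<le> q \<Longrightarrow>
    \<bar>w n * real (i n) * x^(i n - 1) * b^j n\<bar> \<le> C * \<bar>w n * s^i n * b^j n\<bar>"
proof -
  obtain C where C: "\<And>n x. \<bar>x\<bar> \<le> q \<Longrightarrow> real n * \<bar>x\<bar>^(n-1) \<le> C * s^n"
    using of_nat_mult_power_le_geometric[OF qs] by blast
  have "\<bar>w n * real (i n) * x^(i n - 1) * b^j n\<bar> \<le> C * \<bar>w n * s^i n * b^j n\<bar>" if x: "\<bar>x\<bar> \<le> q" for n x
  proof -
    have "\<bar>w n * real (i n) * x^(i n - 1) * b^j n\<bar> = \<bar>w n\<bar> * (real (i n) * \<bar>x\<bar>^(i n - 1)) * \<bar>b\<bar>^j n"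
      by (simp add: abs_mult power_abs)
    also have "\<dots> \<le> \<bar>w n\<bar> * (C * s^i n) * \<bar>b\<bar>^j n"
      using C[OF x, of "i n"] by (intro mult_right_mono mult_left_mono) auto
    also have "\<dots> = C * \<bar>w n * s^i n * b^j n\<bar>"
      using qs by (simp add: abs_mult power_abs)
    finally show ?thesis .
  qed
  then show ?thesis by (rule that)
qed

lemma monomial_series_has_field_derivative:
  fixes w :: "nat \<Rightarrow> real" and i j :: "nat \<Rightarrow> nat"
  assumes abs_summ: "\<And>x. \<bar>x\<bar> < R \<Longrightarrow> summable (\<lambda>n. \<bar>w n * x^i n * b^j n\<bar>)" and a: "\<bar>a\<bar> < R"
  shows "((\<lambda>x. \<Sum>n. w n * x^i n * b^j n) has_field_derivative
    (\<Sum>n. w n * real (i n) * a^(i n - 1) * b^j n)) (at a)"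
proof -
  define d where "d = (R - \<bar>a\<bar>)/3"
  define q where "q = \<bar>a\<bar> + d"
  define s where "s = \<bar>a\<bar> + 2 * d"
  have "d > 0" "R = \<bar>a\<bar> + 3 * d" using a unfolding d_def by (simp, simp add: field_simps)
  then have qs: "\<bar>a\<bar> < q" "0 \<le> q" "q < s" "\<bar>s\<bar> < R"
    unfolding q_def s_def by linarith+
  obtain C where C: "\<And>n x. \<bar>x\<bar> \<le> q \<Longrightarrow>
      \<bar>w n * real (i n) * x^(i n - 1) * b^j n\<bar> \<le> C * \<bar>w n * s^i n * b^j n\<bar>"
    using monomial_series_deriv_dominated[OF qs(2,3)] by blast
  let ?S = "{-q..q}"
  have term_deriv: "((\<lambda>x. w n * x^i n * b^j n) has_field_derivative w n * real (i n) * x^(i n - 1) * b^j n)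
      (at x within ?S)" for n x
  proof -
    have "((\<lambda>x. w n * x^i n * b^j n) has_field_derivative
        w n * (real (i n) * x^(i n - 1)) * b^j n) (at x)"
      using DERIV_pow[of "i n" x UNIV] by (intro DERIV_cmult DERIV_cmult_right) simp
    then show ?thesis by (simp add: has_field_derivative_at_within mult_ac)
  qed
  have unif: "uniformly_convergent_on ?S (\<lambda>n x. \<Sum>k<n. w k * real (i k) * x^(i k - 1) * b^j k)"
  proof (rule Weierstrass_m_test'[where M="\<lambda>n. C * \<bar>w n * s^i n * b^j n\<bar>"])
    show "norm (w n * real (i n) * x^(i n - 1) * b^j n) \<le> C * \<bar>w n * s^i n * b^j n\<bar>" if "x \<in> ?S" for n x
      using C[of x n] that by (simp add: abs_le_iff)
    show "summable (\<lambda>n. C * \<bar>w n * s^i n * b^j n\<bar>)"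
      using abs_summ[OF qs(4)] by (rule summable_mult)
  qed
  have a_int: "a \<in> interior ?S" using qs(1) by (simp add: abs_less_iff)
  have summ_a: "summable (\<lambda>n. w n * a^i n * b^j n)"
    using abs_summ[OF a] by (rule summable_rabs_cancel)
  show ?thesis
  proof (rule has_field_derivative_series'(2)[OF convex_real_interval(5) term_deriv unif _ summ_a a_int])
    show "a \<in> ?S" using a_int interior_subset by blast
  qed
qed

lemma double_powser_on_deriv1:
  assumes "double_powser_on R g"
  shows "\<exists>g'. double_powser_on R g' \<and>
    (\<forall>a b. \<bar>a\<bar> < R \<and> \<bar>b\<bar> < R \<longrightarrow> ((\<lambda>s. g s b) has_real_derivative g' a b) (at a))"
proof -
  obtain w i j where series: "\<forall>a b. \<bar>a\<bar> < R \<and> \<bar>b\<bar> < R \<longrightarrow>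
      summable (\<lambda>n. \<bar>w n * a^i n * b^j n\<bar>) \<and> (\<lambda>n. w n * a^i n * b^j n) sums g a b"
    using assms unfolding double_powser_on_def by blast
  then have abs_summ: "\<And>a b. \<bar>a\<bar> < R \<Longrightarrow> \<bar>b\<bar> < R \<Longrightarrow> summable (\<lambda>n. \<bar>w n * a^i n * b^j n\<bar>)"
    and sums_g: "\<And>a b. \<bar>a\<bar> < R \<Longrightarrow> \<bar>b\<bar> < R \<Longrightarrow> (\<lambda>n. w n * a^i n * b^j n) sums g a b"
    by blast+
  define w' where "w' n = w n * real (i n)" for n
  define i' where "i' n = i n - 1" for n
  define g' where "g' a b = (\<Sum>n. w' n * a^i' n * b^j n)" for a b
  have abs_summ': "summable (\<lambda>n. \<bar>w' n * a^i' n * b^j n\<bar>)" if ab: "\<bar>a\<bar> < R" "\<bar>b\<bar> < R" for a b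
  proof -
    define s where "s = (\<bar>a\<bar> + R)/2"
    have s: "\<bar>a\<bar> < s" "\<bar>s\<bar> < R" using ab by (auto simp: s_def)
    obtain C where C: "\<And>n x. \<bar>x\<bar> \<le> \<bar>a\<bar> \<Longrightarrow>
        \<bar>w n * real (i n) * x^(i n - 1) * b^j n\<bar> \<le> C * \<bar>w n * s^i n * b^j n\<bar>"
      using monomial_series_deriv_dominated[where w=w and i=i and j=j and b=b, of "\<bar>a\<bar>" s] s by auto
    have "summable (\<lambda>n. C * \<bar>w n * s^i n * b^j n\<bar>)"
      using abs_summ[OF s(2) ab(2)] by (rule summable_mult)
    then show ?thesis
      by (rule summable_comparison_test'[where N=0]) (use C in \<open>auto simp: w'_def i'_def\<close>)
  qed
  have "double_powser_on R g'"
    unfolding double_powser_on_def g'_def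
    by (rule exI[of _ w'], rule exI[of _ i'], rule exI[of _ j])
      (use abs_summ' in \<open>blast intro: summable_sums summable_rabs_cancel\<close>)
  moreover have "((\<lambda>s. g s b) has_real_derivative g' a b) (at a)" if ab: "\<bar>a\<bar> < R" "\<bar>b\<bar> < R" for a b
  proof -
    have "((\<lambda>x. \<Sum>n. w n * x^i n * b^j n) has_field_derivative g' a b) (at a)"
      using monomial_series_has_field_derivative[of R w i b j a] abs_summ ab(1,2)
      unfolding g'_def w'_def i'_def by blast
    then show ?thesis
    proof (rule has_field_derivative_transform_within_open[where S="{-R<..<R}"])
      show "(\<Sum>n. w n * x^i n * b^j n) = g x b" if "x \<in> {-R<..<R}" for x
      proof -
        have "\<bar>x\<bar> < R" using that by auto
        then show ?thesis using sums_g[OF _ ab(2)] sums_unique by metis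
      qed
    qed (use ab in auto)
  qed
  ultimately show ?thesis by blast
qed

lemma double_powser_on_deriv2:
  assumes "double_powser_on R g"
  shows "\<exists>g'. double_powser_on R g' \<and>
    (\<forall>a b. \<bar>a\<bar> < R \<and> \<bar>b\<bar> < R \<longrightarrow> ((\<lambda>s. g a s) has_real_derivative g' a b) (at b))"
proof -
  obtain g' where "double_powser_on R g'"
    and "\<And>a b. \<bar>a\<bar> < R \<and> \<bar>b\<bar> < R \<Longrightarrow> ((\<lambda>s. g a s) has_real_derivative g' b a) (at b)"
    using double_powser_on_deriv1[OF double_powser_on_swap[OF assms]] by blast
  then show ?thesis using double_powser_on_swap[of R g'] by auto
qed

definition square :: "real \<Rightarrow> (real \<times> real) set" where
  "square R = {-R<..<R} \<times> {-R<..<R}"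

lemma mem_square [simp]: "(a, b) \<in> square R \<longleftrightarrow> \<bar>a\<bar> < R \<and> \<bar>b\<bar> < R"
  by (auto simp: square_def abs_less_iff)

lemma open_square: "open (square R)"
  by (simp add: square_def open_Times)

lemma continuous_on_double_powser_closed_square:
  assumes "double_powser_on R g" "0 \<le> s" "s < R"
  shows "continuous_on ({-s..s} \<times> {-s..s}) (\<lambda>p. g (fst p) (snd p))"
proof -
  obtain w i j where series: "\<forall>a b. \<bar>a\<bar> < R \<and> \<bar>b\<bar> < R \<longrightarrow>
      summable (\<lambda>n. \<bar>w n * a^i n * b^j n\<bar>) \<and> (\<lambda>n. w n * a^i n * b^j n) sums g a b"
    using assms(1) unfolding double_powser_on_def by blast
  have sR: "\<bar>s\<bar> < R" using assms(2,3) by simp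
  let ?C = "{-s..s} \<times> {-s..s}"
  let ?u = "\<lambda>n (p::real \<times> real). w n * fst p^i n * snd p^j n"
  have "uniform_limit ?C (\<lambda>n p. \<Sum>k<n. ?u k p) (\<lambda>p. suminf (\<lambda>k. ?u k p)) sequentially"
  proof (rule Weierstrass_m_test[where M="\<lambda>n. \<bar>w n * s^i n * s^j n\<bar>"])
    fix n and p :: "real \<times> real" assume "p \<in> ?C"
    then have "\<bar>fst p\<bar> \<le> s" "\<bar>snd p\<bar> \<le> s" by (auto simp: mem_Times_iff abs_le_iff)
    then have "\<bar>w n\<bar> * \<bar>fst p\<bar>^i n * \<bar>snd p\<bar>^j n \<le> \<bar>w n\<bar> * s^i n * s^j n"
      using assms(2) by (intro mult_mono mult_left_mono power_mono) auto
    then show "norm (?u n p) \<le> \<bar>w n * s^i n * s^j n\<bar>"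
      using assms(2) by (simp add: abs_mult power_abs)
  next
    show "summable (\<lambda>n. \<bar>w n * s^i n * s^j n\<bar>)" using series sR by blast
  qed
  then have "continuous_on ?C (\<lambda>p. suminf (\<lambda>k. ?u k p))"
    by (rule uniform_limit_theorem[rotated]) (auto intro!: always_eventually continuous_intros)
  then show ?thesis
  proof (rule continuous_on_cong[THEN iffD1, rotated 2])
    fix p :: "real \<times> real" assume "p \<in> ?C"
    then have "\<bar>fst p\<bar> < R" "\<bar>snd p\<bar> < R" using assms(3) by (auto simp: mem_Times_iff abs_le_iff)
    then show "suminf (\<lambda>k. ?u k p) = g (fst p) (snd p)" using series sums_unique by metis
  qed simp
qed

lemma continuous_on_double_powser:
  assumes "double_powser_on R g"
  shows "continuous_on (square R) (\<lambda>p. g (fst p) (snd p))"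
proof (rule continuous_at_imp_continuous_on, rule ballI)
  fix p assume p: "p \<in> square R"
  obtain a b where ab: "p = (a, b)" "\<bar>a\<bar> < R" "\<bar>b\<bar> < R"
    using p by (cases p) auto
  define s where "s = (max \<bar>a\<bar> \<bar>b\<bar> + R)/2"
  have "\<bar>a\<bar> \<le> max \<bar>a\<bar> \<bar>b\<bar>" "\<bar>b\<bar> \<le> max \<bar>a\<bar> \<bar>b\<bar>" "max \<bar>a\<bar> \<bar>b\<bar> < R"
    using ab by auto
  then have s: "0 \<le> s" "s < R" "p \<in> square s" using ab by (auto simp: s_def)
  have "continuous_on (square s) (\<lambda>p. g (fst p) (snd p))"
    by (rule continuous_on_subset[OF continuous_on_double_powser_closed_square[OF assms s(1,2)]])
      (auto simp: square_def)
  then show "isCont (\<lambda>p. g (fst p) (snd p)) p"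
    using continuous_on_eq_continuous_at[OF open_square] s(3) by blast
qed


section \<open>Functions of class C^k on a square\<close>

fun Ck_on :: "nat \<Rightarrow> real \<Rightarrow> (real \<Rightarrow> real \<Rightarrow> real) \<Rightarrow> bool" where
  "Ck_on 0 R g \<longleftrightarrow> continuous_on (square R) (\<lambda>p. g (fst p) (snd p))"
| "Ck_on (Suc k) R g \<longleftrightarrow> Ck_on 0 R g \<and> Ck_on k R (dx1 g) \<and> Ck_on k R (dx2 g) \<and>
     (\<forall>a b. \<bar>a\<bar> < R \<and> \<bar>b\<bar> < R \<longrightarrow> ((\<lambda>s. g s b) has_real_derivative dx1 g a b) (at a) \<and>
        ((\<lambda>s. g a s) has_real_derivative dx2 g a b) (at b))"

lemma dx1_transform_square:
  assumes eq: "\<And>a b. \<bar>a\<bar> < R \<Longrightarrow> \<bar>b\<bar> < R \<Longrightarrow> g a b = h a b"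
    and ab: "\<bar>a\<bar> < R" "\<bar>b\<bar> < R"
    and deriv: "((\<lambda>s. g s b) has_real_derivative D) (at a)"
  shows "((\<lambda>s. h s b) has_real_derivative D) (at a)" "dx1 h a b = D"
proof -
  show h_deriv: "((\<lambda>s. h s b) has_real_derivative D) (at a)"
  proof (rule has_field_derivative_transform_within_open[OF deriv, where S="{-R<..<R}"])
    show "a \<in> {-R<..<R}" using ab by (auto simp: abs_less_iff)
  qed (use eq ab in \<open>auto simp: abs_less_iff\<close>)
  then show "dx1 h a b = D" unfolding dx1_def by (rule DERIV_imp_deriv)
qed

lemma dx2_transform_square:
  assumes eq: "\<And>a b. \<bar>a\<bar> < R \<Longrightarrow> \<bar>b\<bar> < R \<Longrightarrow> g a b = h a b"
    and ab: "\<bar>a\<bar> < R" "\<bar>b\<bar> < R"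
    and deriv: "((\<lambda>s. g a s) has_real_derivative D) (at b)"
  shows "((\<lambda>s. h a s) has_real_derivative D) (at b)" "dx2 h a b = D"
proof -
  show h_deriv: "((\<lambda>s. h a s) has_real_derivative D) (at b)"
  proof (rule has_field_derivative_transform_within_open[OF deriv, where S="{-R<..<R}"])
    show "b \<in> {-R<..<R}" using ab by (auto simp: abs_less_iff)
  qed (use eq ab in \<open>auto simp: abs_less_iff\<close>)
  then show "dx2 h a b = D" unfolding dx2_def by (rule DERIV_imp_deriv)
qed

lemma Ck_on_SucD:
  assumes "Ck_on (Suc k) R g"
  shows "Ck_on 0 R g" "Ck_on k R (dx1 g)" "Ck_on k R (dx2 g)"
    "\<And>a b. \<bar>a\<bar> < R \<Longrightarrow> \<bar>b\<bar> < R \<Longrightarrow> ((\<lambda>s. g s b) has_real_derivative dx1 g a b) (at a)"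
    "\<And>a b. \<bar>a\<bar> < R \<Longrightarrow> \<bar>b\<bar> < R \<Longrightarrow> ((\<lambda>s. g a s) has_real_derivative dx2 g a b) (at b)"
  using assms unfolding Ck_on.simps(2) by blast+

lemma Ck_on_0_cong:
  assumes "Ck_on 0 R g" "\<And>a b. \<bar>a\<bar> < R \<Longrightarrow> \<bar>b\<bar> < R \<Longrightarrow> g a b = h a b"
  shows "Ck_on 0 R h"
proof -
  have "continuous_on (square R) (\<lambda>p. g (fst p) (snd p)) \<longleftrightarrow>
      continuous_on (square R) (\<lambda>p. h (fst p) (snd p))"
    using assms(2) by (intro continuous_on_cong) (auto simp: square_def abs_less_iff)
  with assms(1) show ?thesis by simp
qed

lemma Ck_on_cong:
  assumes "Ck_on k R g" "\<And>a b. \<bar>a\<bar> < R \<Longrightarrow> \<bar>b\<bar> < R \<Longrightarrow> g a b = h a b"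
  shows "Ck_on k R h"
  using assms
proof (induction k arbitrary: g h)
  case 0
  then show ?case by (rule Ck_on_0_cong)
next
  case (Suc k)
  note g = Ck_on_SucD[OF Suc.prems(1)] and eq = Suc.prems(2)
  have dx1_eq: "dx1 g a b = dx1 h a b" and dx2_eq: "dx2 g a b = dx2 h a b"
    if "\<bar>a\<bar> < R" "\<bar>b\<bar> < R" for a b
    using dx1_transform_square(2)[where g=g and h=h, OF eq that g(4)[OF that]]
      dx2_transform_square(2)[where g=g and h=h, OF eq that g(5)[OF that]] by simp_all
  have "Ck_on 0 R h" by (rule Ck_on_0_cong[OF g(1) eq])
  moreover have "Ck_on k R (dx1 h)" by (rule Suc.IH[OF g(2)]) (rule dx1_eq)
  moreover have "Ck_on k R (dx2 h)" by (rule Suc.IH[OF g(3)]) (rule dx2_eq)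
  moreover have "((\<lambda>s. h s b) has_real_derivative dx1 h a b) (at a)"
    and "((\<lambda>s. h a s) has_real_derivative dx2 h a b) (at b)"
    if "\<bar>a\<bar> < R" "\<bar>b\<bar> < R" for a b
    using dx1_transform_square(1)[where g=g and h=h, OF eq that g(4)[OF that]]
      dx2_transform_square(1)[where g=g and h=h, OF eq that g(5)[OF that]]
    unfolding dx1_eq[OF that] dx2_eq[OF that] by simp_all
  ultimately show ?case by (simp only: Ck_on.simps(2)) blast
qed

lemma Ck_on_SucI:
  assumes "Ck_on 0 R g"
    and "\<And>a b. \<bar>a\<bar> < R \<Longrightarrow> \<bar>b\<bar> < R \<Longrightarrow> ((\<lambda>s. g s b) has_real_derivative g1 a b) (at a)"
    and "\<And>a b. \<bar>a\<bar> < R \<Longrightarrow> \<bar>b\<bar> < R \<Longrightarrow> ((\<lambda>s. g a s) has_real_derivative g2 a b) (at b)"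
    and "Ck_on k R g1" "Ck_on k R g2"
  shows "Ck_on (Suc k) R g"
proof -
  have dx1_eq: "g1 a b = dx1 g a b" and dx2_eq: "g2 a b = dx2 g a b"
    if "\<bar>a\<bar> < R" "\<bar>b\<bar> < R" for a b
    using assms(2,3)[OF that] unfolding dx1_def dx2_def by (simp_all add: DERIV_imp_deriv)
  have "Ck_on k R (dx1 g)" by (rule Ck_on_cong[OF assms(4) dx1_eq])
  moreover have "Ck_on k R (dx2 g)" by (rule Ck_on_cong[OF assms(5) dx2_eq])
  moreover have "((\<lambda>s. g s b) has_real_derivative dx1 g a b) (at a)"
    and "((\<lambda>s. g a s) has_real_derivative dx2 g a b) (at b)"
    if "\<bar>a\<bar> < R" "\<bar>b\<bar> < R" for a b
    using assms(2,3)[OF that] unfolding dx1_eq[OF that] dx2_eq[OF that] by simp_all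
  ultimately show ?thesis using assms(1) by (simp only: Ck_on.simps(2)) blast
qed

lemma Ck_on_Suc_imp: "Ck_on (Suc k) R g \<Longrightarrow> Ck_on k R g"
proof (induction k arbitrary: g)
  case 0
  then show ?case by simp
next
  case (Suc k)
  note g = Ck_on_SucD[OF Suc.prems]
  show ?case
    by (rule Ck_on_SucI[OF g(1) g(4) g(5) Suc.IH[OF g(2)] Suc.IH[OF g(3)]])
qed

lemma Ck_on_le: "k \<le> l \<Longrightarrow> Ck_on l R g \<Longrightarrow> Ck_on k R g"
  by (induction l rule: dec_induct) (blast dest: Ck_on_Suc_imp)+

lemma Ck_on_add: "Ck_on k R g \<Longrightarrow> Ck_on k R h \<Longrightarrow> Ck_on k R (\<lambda>a b. g a b + h a b)"
proof (induction k arbitrary: g h)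
  case 0
  then show ?case by (simp add: continuous_on_add)
next
  case (Suc k)
  note g = Ck_on_SucD[OF Suc.prems(1)] and h = Ck_on_SucD[OF Suc.prems(2)]
  show ?case
  proof (rule Ck_on_SucI)
    show "Ck_on 0 R (\<lambda>a b. g a b + h a b)" using g(1) h(1) by (simp add: continuous_on_add)
    show "((\<lambda>s. g s b + h s b) has_real_derivative dx1 g a b + dx1 h a b) (at a)"
      if "\<bar>a\<bar> < R" "\<bar>b\<bar> < R" for a b using g(4)[OF that] h(4)[OF that] by (rule DERIV_add)
    show "((\<lambda>s. g a s + h a s) has_real_derivative dx2 g a b + dx2 h a b) (at b)"
      if "\<bar>a\<bar> < R" "\<bar>b\<bar> < R" for a b using g(5)[OF that] h(5)[OF that] by (rule DERIV_add)
  qed (rule Suc.IH[OF g(2) h(2)], rule Suc.IH[OF g(3) h(3)])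
qed

lemma Ck_on_minus: "Ck_on k R g \<Longrightarrow> Ck_on k R (\<lambda>a b. - g a b)"
proof (induction k arbitrary: g)
  case 0
  then show ?case by (simp add: continuous_on_minus)
next
  case (Suc k)
  note g = Ck_on_SucD[OF Suc.prems]
  show ?case
  proof (rule Ck_on_SucI)
    show "Ck_on 0 R (\<lambda>a b. - g a b)" using g(1) by (simp add: continuous_on_minus)
    show "((\<lambda>s. - g s b) has_real_derivative - dx1 g a b) (at a)"
      if "\<bar>a\<bar> < R" "\<bar>b\<bar> < R" for a b using g(4)[OF that] by (rule DERIV_minus)
    show "((\<lambda>s. - g a s) has_real_derivative - dx2 g a b) (at b)"
      if "\<bar>a\<bar> < R" "\<bar>b\<bar> < R" for a b using g(5)[OF that] by (rule DERIV_minus)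
  qed (rule Suc.IH[OF g(2)], rule Suc.IH[OF g(3)])
qed

lemma Ck_on_diff: "Ck_on k R g \<Longrightarrow> Ck_on k R h \<Longrightarrow> Ck_on k R (\<lambda>a b. g a b - h a b)"
  using Ck_on_add[OF _ Ck_on_minus[of k R h], of g] by simp

lemma Ck_on_mult: "Ck_on k R g \<Longrightarrow> Ck_on k R h \<Longrightarrow> Ck_on k R (\<lambda>a b. g a b * h a b)"
proof (induction k arbitrary: g h)
  case 0
  then show ?case by (simp add: continuous_on_mult)
next
  case (Suc k)
  note g = Ck_on_SucD[OF Suc.prems(1)] and h = Ck_on_SucD[OF Suc.prems(2)]
  have gk: "Ck_on k R g" and hk: "Ck_on k R h" using Suc.prems by (auto intro: Ck_on_Suc_imp)
  show ?case
  proof (rule Ck_on_SucI)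
    show "Ck_on 0 R (\<lambda>a b. g a b * h a b)" using g(1) h(1) by (simp add: continuous_on_mult)
    show "((\<lambda>s. g s b * h s b) has_real_derivative g a b * dx1 h a b + dx1 g a b * h a b) (at a)"
      if "\<bar>a\<bar> < R" "\<bar>b\<bar> < R" for a b using g(4)[OF that] h(4)[OF that] by (rule DERIV_mult')
    show "((\<lambda>s. g a s * h a s) has_real_derivative g a b * dx2 h a b + dx2 g a b * h a b) (at b)"
      if "\<bar>a\<bar> < R" "\<bar>b\<bar> < R" for a b using g(5)[OF that] h(5)[OF that] by (rule DERIV_mult')
    show "Ck_on k R (\<lambda>a b. g a b * dx1 h a b + dx1 g a b * h a b)"
      by (intro Ck_on_add Suc.IH gk hk g(2) h(2))
    show "Ck_on k R (\<lambda>a b. g a b * dx2 h a b + dx2 g a b * h a b)"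
      by (intro Ck_on_add Suc.IH gk hk g(3) h(3))
  qed
qed

lemma Ck_on_jac2: "Ck_on (Suc k) R g \<Longrightarrow> Ck_on (Suc k) R h \<Longrightarrow> Ck_on k R (jac2 g h)"
  unfolding jac2_def[abs_def] by (intro Ck_on_diff Ck_on_mult; simp)

lemma double_powser_on_imp_Ck_on: "double_powser_on R g \<Longrightarrow> Ck_on k R g"
proof (induction k arbitrary: g)
  case 0
  then show ?case by (simp add: continuous_on_double_powser)
next
  case (Suc k)
  obtain g1 where "double_powser_on R g1"
    "\<And>a b. \<bar>a\<bar> < R \<and> \<bar>b\<bar> < R \<Longrightarrow> ((\<lambda>s. g s b) has_real_derivative g1 a b) (at a)"
    using double_powser_on_deriv1[OF Suc.prems] by blast
  moreover obtain g2 where "double_powser_on R g2"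
    "\<And>a b. \<bar>a\<bar> < R \<and> \<bar>b\<bar> < R \<Longrightarrow> ((\<lambda>s. g a s) has_real_derivative g2 a b) (at b)"
    using double_powser_on_deriv2[OF Suc.prems] by blast
  ultimately show ?case
    using continuous_on_double_powser[OF Suc.prems] Suc.IH by (intro Ck_on_SucI[of R g g1 g2]) simp_all
qed

lemma Ck_on_has_derivative:
  assumes g: "Ck_on (Suc k) R g" and ab: "\<bar>a\<bar> < R" "\<bar>b\<bar> < R"
  shows "((\<lambda>p. g (fst p) (snd p)) has_derivative (\<lambda>h. dx1 g a b * fst h + dx2 g a b * snd h)) (at (a, b))"
proof -
  note g = Ck_on_SucD[OF g]
  let ?I = "{-R<..<R}"
  have ab_sq: "(a, b) \<in> square R" using ab by simp
  have "continuous_on (square R) (\<lambda>p. dx2 g (fst p) (snd p))"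
    using Ck_on_le[OF _ g(3), of 0] by simp
  then have "continuous_on (square R) (\<lambda>p. blinfun_mult_right (dx2 g (fst p) (snd p)))"
    by (rule bounded_linear.continuous_on[OF bounded_linear_blinfun_mult_right])
  then have "isCont (\<lambda>p. blinfun_mult_right (dx2 g (fst p) (snd p))) (a, b)"
    using ab_sq continuous_on_eq_continuous_at[OF open_square] by blast
  then have cont: "continuous (at (a, b) within ?I \<times> ?I) (\<lambda>(x, y). blinfun_mult_right (dx2 g x y))"
    by (simp add: split_beta' continuous_at_imp_continuous_within)
  have dx: "((\<lambda>x. g x b) has_derivative (\<lambda>h. dx1 g a b * h)) (at a within ?I)"
    using g(4)[OF ab] unfolding has_field_derivative_def by (rule has_derivative_at_withinI)
  have dy: "((\<lambda>y. g x y) has_derivative blinfun_apply (blinfun_mult_right (dx2 g x y))) (at y within ?I)"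
    if "x \<in> ?I" "y \<in> ?I" for x y
    using g(5)[of x y] that unfolding has_field_derivative_def
    by (simp add: abs_less_iff has_derivative_at_withinI)
  have "((\<lambda>(x, y). g x y) has_derivative
      (\<lambda>(h1, h2). dx1 g a b * h1 + blinfun_apply (blinfun_mult_right (dx2 g a b)) h2)) (at (a, b) within ?I \<times> ?I)"
    by (rule has_derivative_partialsI[OF dx dy cont]) (use ab in \<open>auto simp: abs_less_iff\<close>)
  then show ?thesis
    using at_within_open[OF ab_sq open_square] by (simp add: square_def split_beta')
qed


lemma analytic_atE:
  assumes "analytic_at (t0, a0, b0) g"
  obtains r c where "r > 0" "\<And>t a b. \<bar>t - t0\<bar> < r \<Longrightarrow> \<bar>a - a0\<bar> < r \<Longrightarrow> \<bar>b - b0\<bar> < r \<Longrightarrow>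
      ((\<lambda>x. c x * (t - t0) ^ fst x * (a - a0) ^ fst (snd x) * (b - b0) ^ snd (snd x)) has_sum g t a b) UNIV"
proof -
  have split3: "(\<lambda>(i::nat, j::nat, k::nat). P i j k) = (\<lambda>x. P (fst x) (fst (snd x)) (snd (snd x)))" for P
    by (simp add: fun_eq_iff split_beta)
  from assms obtain r c where "r > 0" and "\<forall>t a b. \<bar>t - t0\<bar> < r \<and> \<bar>a - a0\<bar> < r \<and> \<bar>b - b0\<bar> < r \<longrightarrow>
      ((\<lambda>(i, j, k). c (i, j, k) * (t - t0) ^ i * (a - a0) ^ j * (b - b0) ^ k) has_sum g t a b) UNIV"
    unfolding analytic_at_def by auto
  then show ?thesis
    by (intro that[of r c]) (simp_all only: split3 prod.collapse)
qed

lemma analytic0_slices_double_powser: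
  assumes "analytic0 g"
  shows "\<exists>r>0. \<forall>t. \<bar>t\<bar> < r \<longrightarrow> double_powser_on r (g t)"
proof -
  obtain r c where r: "r > 0" and series: "\<And>t a b. \<bar>t - 0\<bar> < r \<Longrightarrow> \<bar>a - 0\<bar> < r \<Longrightarrow> \<bar>b - 0\<bar> < r \<Longrightarrow>
      ((\<lambda>x. c x * (t - 0) ^ fst x * (a - 0) ^ fst (snd x) * (b - 0) ^ snd (snd x)) has_sum g t a b) UNIV"
    using analytic_atE[of 0 0 0 g] assms unfolding analytic0_def by blast
  have "double_powser_on r (g t)" if t: "\<bar>t\<bar> < r" for t
  proof -
    define w where "w n = c (decode_triple n) * t ^ fst (decode_triple n)" for n
    define i where "i n = fst (snd (decode_triple n))" for n
    define j where "j n = snd (snd (decode_triple n))" for n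
    have "summable (\<lambda>n. \<bar>w n * a ^ i n * b ^ j n\<bar>) \<and> (\<lambda>n. w n * a ^ i n * b ^ j n) sums g t a b"
      if "\<bar>a\<bar> < r" "\<bar>b\<bar> < r" for a b
      using has_sum_triple_decode[OF series[of t a b]] t that by (simp add: w_def i_def j_def)
    then show ?thesis unfolding double_powser_on_def by blast
  qed
  then show ?thesis using r by blast
qed

lemma analytic_at_isCont:
  assumes "analytic_at (t0, a0, b0) g"
  shows "isCont (\<lambda>p. g (fst p) (fst (snd p)) (snd (snd p))) (t0, a0, b0)"
proof -
  obtain r c where r: "r > 0" and series: "\<And>t a b. \<bar>t - t0\<bar> < r \<Longrightarrow> \<bar>a - a0\<bar> < r \<Longrightarrow> \<bar>b - b0\<bar> < r \<Longrightarrow>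
      ((\<lambda>x. c x * (t - t0) ^ fst x * (a - a0) ^ fst (snd x) * (b - b0) ^ snd (snd x)) has_sum g t a b) UNIV"
    using analytic_atE[OF assms] by blast
  define s where "s = r/2"
  have s: "0 < s" "s < r" using r by (auto simp: s_def)
  let ?C = "{p::real\<times>real\<times>real. \<bar>fst p - t0\<bar> \<le> s \<and> \<bar>fst (snd p) - a0\<bar> \<le> s \<and> \<bar>snd (snd p) - b0\<bar> \<le> s}"
  let ?O = "{p::real\<times>real\<times>real. \<bar>fst p - t0\<bar> < s \<and> \<bar>fst (snd p) - a0\<bar> < s \<and> \<bar>snd (snd p) - b0\<bar> < s}"
  define F where "F p x = c x * (fst p - t0) ^ fst x * (fst (snd p) - a0) ^ fst (snd x) * (snd (snd p) - b0) ^ snd (snd x)"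
    for p :: "real\<times>real\<times>real" and x :: "nat\<times>nat\<times>nat"
  let ?u = "\<lambda>n p. F p (decode_triple n)"
  define P where "P = (t0 + s, a0 + s, b0 + s)"
  have corner: "(F P has_sum g (fst P) (fst (snd P)) (snd (snd P))) UNIV"
    unfolding F_def using series[of "t0+s" "a0+s" "b0+s"] s by (simp add: P_def)
  have "uniform_limit ?C (\<lambda>n p. \<Sum>k<n. ?u k p) (\<lambda>p. suminf (\<lambda>k. ?u k p)) sequentially"
  proof (rule Weierstrass_m_test[where M="\<lambda>n. \<bar>F P (decode_triple n)\<bar>"])
    fix n and p :: "real\<times>real\<times>real" assume p: "p \<in> ?C"
    obtain i j k where x: "decode_triple n = (i, j, k)" by (metis prod_cases3)
    have "\<bar>fst p - t0\<bar>^i \<le> s^i" using p by (intro power_mono) auto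
    moreover have "\<bar>fst (snd p) - a0\<bar>^j \<le> s^j" using p by (intro power_mono) auto
    moreover have "\<bar>snd (snd p) - b0\<bar>^k \<le> s^k" using p by (intro power_mono) auto
    ultimately have "\<bar>c (i,j,k)\<bar> * \<bar>fst p - t0\<bar>^i * \<bar>fst (snd p) - a0\<bar>^j * \<bar>snd (snd p) - b0\<bar>^k
        \<le> \<bar>c (i,j,k)\<bar> * s^i * s^j * s^k"
      using s by (intro mult_mono mult_left_mono) auto
    then show "norm (?u n p) \<le> \<bar>F P (decode_triple n)\<bar>"
      using s by (simp add: F_def P_def x abs_mult power_abs)
  next
    show "summable (\<lambda>n. \<bar>F P (decode_triple n)\<bar>)" by (rule has_sum_triple_decode(2)[OF corner])
  qed
  then have "continuous_on ?C (\<lambda>p. suminf (\<lambda>k. ?u k p))"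
    by (rule uniform_limit_theorem[rotated]) (auto intro!: always_eventually continuous_intros simp: F_def)
  then have series_cont: "continuous_on ?O (\<lambda>p. suminf (\<lambda>k. ?u k p))"
    by (rule continuous_on_subset) auto
  have series_eq: "suminf (\<lambda>k. ?u k p) = g (fst p) (fst (snd p)) (snd (snd p))" if "p \<in> ?O" for p
  proof -
    have "(F p has_sum g (fst p) (fst (snd p)) (snd (snd p))) UNIV"
      unfolding F_def using series[of "fst p" "fst (snd p)" "snd (snd p)"] that s by auto
    then show ?thesis using has_sum_triple_decode(1) sums_unique by metis
  qed
  have "continuous_on ?O (\<lambda>p. suminf (\<lambda>k. ?u k p)) =
      continuous_on ?O (\<lambda>p. g (fst p) (fst (snd p)) (snd (snd p)))"
    by (rule continuous_on_cong) (use series_eq in auto)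
  with series_cont have "continuous_on ?O (\<lambda>p. g (fst p) (fst (snd p)) (snd (snd p)))" by simp
  moreover have "open ?O"
    by (intro open_Collect_conj open_Collect_less continuous_intros)
  moreover have "(t0, a0, b0) \<in> ?O" using s by simp
  ultimately show ?thesis using continuous_on_eq_continuous_at by blast
qed

lemma near0_conj: "near0 P \<Longrightarrow> near0 Q \<Longrightarrow> near0 (\<lambda>t a b. P t a b \<and> Q t a b)"
  unfolding near0_def by (metis min_less_iff_conj)

lemma analytic0_slices_common_radius:
  assumes "analytic0 g1" "analytic0 g2" "near0 P"
  shows "\<exists>R>0. \<forall>t. \<bar>t\<bar> < R \<longrightarrow> double_powser_on R (g1 t) \<and> double_powser_on R (g2 t) \<and>
    (\<forall>a b. \<bar>a\<bar> < R \<and> \<bar>b\<bar> < R \<longrightarrow> P t a b)"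
proof -
  obtain r1 where r1: "r1 > 0" "\<And>t. \<bar>t\<bar> < r1 \<Longrightarrow> double_powser_on r1 (g1 t)"
    using analytic0_slices_double_powser[OF assms(1)] by blast
  obtain r2 where r2: "r2 > 0" "\<And>t. \<bar>t\<bar> < r2 \<Longrightarrow> double_powser_on r2 (g2 t)"
    using analytic0_slices_double_powser[OF assms(2)] by blast
  obtain e where e: "e > 0" "\<And>t a b. \<bar>t\<bar> < e \<Longrightarrow> \<bar>a\<bar> < e \<Longrightarrow> \<bar>b\<bar> < e \<Longrightarrow> P t a b"
    using assms(3) unfolding near0_def by blast
  define R where "R = min (min r1 r2) e"
  have R: "R > 0" "R \<le> r1" "R \<le> r2" "R \<le> e" using r1 r2 e by (auto simp: R_def)
  have "double_powser_on R (g1 t)" "double_powser_on R (g2 t)" if "\<bar>t\<bar> < R" for t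
    using double_powser_on_mono[OF r1(2) R(2)] double_powser_on_mono[OF r2(2) R(3)] that R by auto
  then show ?thesis using R e(2) by (intro exI[of _ R]) auto
qed


section \<open>Nondegenerate common zeros are isolated\<close>

lemma inj_linear_2x2:
  fixes a b c d :: real
  assumes "a * d - b * c \<noteq> 0"
  shows "inj (\<lambda>h::real \<times> real. (a * fst h + b * snd h, c * fst h + d * snd h))"
proof (rule injI)
  fix h h' :: "real \<times> real"
  assume "(a * fst h + b * snd h, c * fst h + d * snd h) = (a * fst h' + b * snd h', c * fst h' + d * snd h')"
  then have e1: "a * fst h + b * snd h = a * fst h' + b * snd h'"
    and e2: "c * fst h + d * snd h = c * fst h' + d * snd h'"
    by auto
  have "(a * d - b * c) * (fst h - fst h') = d * (a * fst h + b * snd h - (a * fst h' + b * snd h'))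
      - b * (c * fst h + d * snd h - (c * fst h' + d * snd h'))"
    by (simp add: algebra_simps)
  also have "\<dots> = 0" using e1 e2 by simp
  finally have "fst h = fst h'" using assms by simp
  have "(a * d - b * c) * (snd h - snd h') = a * (c * fst h + d * snd h - (c * fst h' + d * snd h'))
      - c * (a * fst h + b * snd h - (a * fst h' + b * snd h'))"
    by (simp add: algebra_simps)
  also have "\<dots> = 0" using e1 e2 by simp
  finally have "snd h = snd h'" using assms by simp
  show "h = h'" using \<open>fst h = fst h'\<close> \<open>snd h = snd h'\<close> by (simp add: prod_eq_iff)
qed

lemma has_derivative_inj_isolated_fibre:
  fixes \<Phi> :: "'a::real_normed_vector \<Rightarrow> 'b::euclidean_space"
  assumes deriv: "(\<Phi> has_derivative L) (at q)" and "inj L"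
  shows "\<exists>e>0. \<forall>p. p \<noteq> q \<and> dist p q < e \<longrightarrow> \<Phi> p \<noteq> \<Phi> q"
proof -
  have "linear L" using deriv by (intro bounded_linear.linear has_derivative_bounded_linear)
  then obtain B where B: "B > 0" "\<And>x. B * norm x \<le> norm (L x)"
    using linear_inj_bounded_below_pos[OF _ \<open>inj L\<close>] by blast
  have "\<forall>e>0. \<exists>d>0. \<forall>y. norm (y - q) < d \<longrightarrow> norm (\<Phi> y - \<Phi> q - L (y - q)) \<le> e * norm (y - q)"
    using deriv unfolding has_derivative_at_alt by blast
  then obtain e where e: "e > 0"
    "\<And>y. norm (y - q) < e \<Longrightarrow> norm (\<Phi> y - \<Phi> q - L (y - q)) \<le> B/2 * norm (y - q)"
    using B(1) by (metis half_gt_zero)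
  have "\<Phi> p \<noteq> \<Phi> q" if p: "p \<noteq> q" "dist p q < e" for p
  proof -
    have n: "norm (p - q) < e" "norm (p - q) > 0" using p by (auto simp: dist_norm)
    have "L (p - q) = (\<Phi> p - \<Phi> q) - (\<Phi> p - \<Phi> q - L (p - q))" by simp
    then have "norm (L (p - q)) \<le> norm (\<Phi> p - \<Phi> q) + norm (\<Phi> p - \<Phi> q - L (p - q))"
      by (metis norm_triangle_ineq4)
    then have "B/2 * norm (p - q) \<le> norm (\<Phi> p - \<Phi> q)" using e(2)[OF n(1)] B(2)[of "p - q"] by linarith
    moreover have "B/2 * norm (p - q) > 0" using B(1) n(2) by simp
    ultimately show ?thesis by auto
  qed
  then show ?thesis using e(1) by blast
qed

lemma isolated_common_zero:
  assumes J: "Ck_on (Suc k) R J" and F: "Ck_on (Suc k) R F" and ab: "\<bar>a\<bar> < R" "\<bar>b\<bar> < R"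
    and zero: "J a b = 0" "F a b = 0" and nondeg: "jac2 F J a b \<noteq> 0"
  shows "\<exists>e>0. \<forall>p. p \<noteq> (a, b) \<and> dist p (a, b) < e \<longrightarrow> \<not> (J (fst p) (snd p) = 0 \<and> F (fst p) (snd p) = 0)"
proof -
  let ?\<Phi> = "\<lambda>p. (J (fst p) (snd p), F (fst p) (snd p))"
  let ?L = "\<lambda>h::real \<times> real. (dx1 J a b * fst h + dx2 J a b * snd h, dx1 F a b * fst h + dx2 F a b * snd h)"
  have "(?\<Phi> has_derivative ?L) (at (a, b))"
    using Ck_on_has_derivative[OF J ab] Ck_on_has_derivative[OF F ab] by (rule has_derivative_Pair)
  moreover have "inj ?L"
    using nondeg by (intro inj_linear_2x2) (simp add: jac2_def algebra_simps)
  ultimately obtain e where "e > 0" "\<And>p. p \<noteq> (a, b) \<and> dist p (a, b) < e \<Longrightarrow> ?\<Phi> p \<noteq> ?\<Phi> (a, b)"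
    using has_derivative_inj_isolated_fibre by blast
  then show ?thesis using zero by auto
qed

lemma disc2_subset_square: "\<bar>\<epsilon>\<bar> < R \<Longrightarrow> disc2 \<epsilon> \<subseteq> square R"
proof
  fix p :: "real \<times> real" assume "\<bar>\<epsilon>\<bar> < R" and p: "p \<in> disc2 \<epsilon>"
  obtain a b where p_ab: "p = (a, b)" by (cases p)
  then have "a\<^sup>2 + b\<^sup>2 \<le> \<epsilon>\<^sup>2" using p by (simp add: disc2_def)
  moreover have "0 \<le> a\<^sup>2" "0 \<le> b\<^sup>2" by simp_all
  ultimately have "a\<^sup>2 \<le> \<epsilon>\<^sup>2" "b\<^sup>2 \<le> \<epsilon>\<^sup>2" by linarith+
  then have "\<bar>a\<bar> \<le> \<bar>\<epsilon>\<bar>" "\<bar>b\<bar> \<le> \<bar>\<epsilon>\<bar>" by (simp_all only: abs_le_square_iff)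
  then have "\<bar>a\<bar> < R" "\<bar>b\<bar> < R" using \<open>\<bar>\<epsilon>\<bar> < R\<close> by linarith+
  then show "p \<in> square R" using p_ab by simp
qed

lemma closed_disc2: "closed (disc2 r)"
proof -
  have "disc2 r = {p::real \<times> real. (fst p)\<^sup>2 + (snd p)\<^sup>2 \<le> r\<^sup>2}" by (auto simp: disc2_def)
  then show ?thesis by (simp add: closed_Collect_le continuous_intros)
qed

lemma bounded_disc2: "bounded (disc2 r)"
proof -
  have "norm p \<le> \<bar>r\<bar>" if "p \<in> disc2 r" for p :: "real \<times> real"
  proof -
    obtain a b where p_ab: "p = (a, b)" by (cases p)
    have "a\<^sup>2 + b\<^sup>2 \<le> r\<^sup>2" using that p_ab by (simp add: disc2_def)
    then have "sqrt (a\<^sup>2 + b\<^sup>2) \<le> sqrt (r\<^sup>2)" by (rule real_sqrt_le_mono)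
    then show ?thesis using p_ab by (simp add: norm_prod_def)
  qed
  then show ?thesis unfolding bounded_iff by blast
qed

lemma finite_nondegenerate_common_zeros:
  assumes J: "\<And>k. Ck_on k R J" and F: "\<And>k. Ck_on k R F" and G: "\<And>k. Ck_on k R G"
    and "\<bar>\<epsilon>\<bar> < R"
    and nondeg: "\<And>a b. \<bar>a\<bar> < R \<Longrightarrow> \<bar>b\<bar> < R \<Longrightarrow> J a b = 0 \<Longrightarrow> F a b = 0 \<Longrightarrow> G a b = 0 \<Longrightarrow>
      jac2 F J a b \<noteq> 0 \<or> jac2 G J a b \<noteq> 0"
  shows "finite {(a, b) \<in> disc2 \<epsilon>. J a b = 0 \<and> F a b = 0 \<and> G a b = 0}"
    (is "finite ?Z")
proof -
  have sub: "disc2 \<epsilon> \<subseteq> square R" using \<open>\<bar>\<epsilon>\<bar> < R\<close> by (rule disc2_subset_square)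
  have cont: "continuous_on (disc2 \<epsilon>) (\<lambda>p. h (fst p) (snd p))" if "\<And>k. Ck_on k R h" for h
    using that[of 0] sub by (auto intro: continuous_on_subset)
  let ?zeros = "\<lambda>h. disc2 \<epsilon> \<inter> (\<lambda>p. h (fst p) (snd p)) -` {0}"
  have "?Z = ?zeros J \<inter> ?zeros F \<inter> ?zeros G"
  proof (rule set_eqI)
    fix p :: "real \<times> real"
    show "p \<in> ?Z \<longleftrightarrow> p \<in> ?zeros J \<inter> ?zeros F \<inter> ?zeros G" by (cases p) auto
  qed
  then have "closed ?Z"
    by (simp only:) (intro closed_Int continuous_closed_preimage closed_disc2 closed_singleton cont J F G)
  moreover have "bounded ?Z" by (rule bounded_subset[OF bounded_disc2]) auto
  ultimately have "compact ?Z" by (simp add: compact_eq_bounded_closed)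
  moreover have "\<not> z islimpt ?Z" if "z \<in> ?Z" for z
  proof
    assume "z islimpt ?Z"
    obtain a b where z: "z = (a, b)" "(a, b) \<in> disc2 \<epsilon>" "J a b = 0" "F a b = 0" "G a b = 0"
      using \<open>z \<in> ?Z\<close> by auto
    then have ab: "\<bar>a\<bar> < R" "\<bar>b\<bar> < R" using sub by auto
    obtain H where H: "H = F \<or> H = G" "H a b = 0" "jac2 H J a b \<noteq> 0"
      using nondeg[OF ab z(3-5)] z(4,5) by blast
    then have "Ck_on (Suc 0) R H" using F G by blast
    then obtain e where "e > 0"
      and e: "\<And>p. p \<noteq> (a, b) \<and> dist p (a, b) < e \<Longrightarrow> \<not> (J (fst p) (snd p) = 0 \<and> H (fst p) (snd p) = 0)"
      using isolated_common_zero[OF J[of "Suc 0"] _ ab z(3) H(2,3)] by blast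
    then obtain p where "p \<in> ?Z" "p \<noteq> z" "dist p z < e"
      using \<open>z islimpt ?Z\<close> unfolding islimpt_approachable by blast
    then show False using e[of p] H(1) z(1) by auto
  qed
  ultimately show ?thesis using finite_not_islimpt_in_compact[of ?Z ?Z] by simp
qed


section \<open>Localisation of the critical set\<close>

lemma compact_lower_bound_near_zero_slice:
  fixes \<phi> :: "real \<times> 'a::metric_space \<Rightarrow> real"
  assumes K: "compact K" and "e > 0" and cont: "continuous_on ({-e..e} \<times> K) \<phi>"
    and pos: "\<And>x. x \<in> K \<Longrightarrow> \<phi> (0, x) > 0"
  shows "\<exists>m>0. \<exists>\<tau>>0. \<forall>t x. \<bar>t\<bar> < \<tau> \<and> x \<in> K \<longrightarrow> m \<le> \<phi> (t, x)"
proof (cases "K = {}")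
  case True
  then show ?thesis using \<open>e > 0\<close> by blast
next
  case False
  let ?Q = "{-e..e} \<times> K"
  have "uniformly_continuous_on ?Q \<phi>"
    using cont by (rule compact_uniformly_continuous) (intro compact_Times compact_Icc K)
  then have uc: "\<forall>m>0. \<exists>d>0. \<forall>x\<in>?Q. \<forall>x'\<in>?Q. dist x' x < d \<longrightarrow> dist (\<phi> x') (\<phi> x) < m"
    unfolding uniformly_continuous_on_def .
  have "continuous_on K (\<lambda>x. \<phi> (0, x))"
    by (rule continuous_on_compose2[OF cont]) (use \<open>e > 0\<close> in \<open>auto intro!: continuous_intros\<close>)
  then obtain xm where xm: "xm \<in> K" "\<And>y. y \<in> K \<Longrightarrow> \<phi> (0, xm) \<le> \<phi> (0, y)"
    using continuous_attains_inf[OF K False] by blast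
  define m where "m = \<phi> (0, xm) / 2"
  have "m > 0" using pos[OF xm(1)] by (simp add: m_def)
  then obtain d where "d > 0" and d: "\<forall>x\<in>?Q. \<forall>x'\<in>?Q. dist x' x < d \<longrightarrow> dist (\<phi> x') (\<phi> x) < m"
    using uc by blast
  have "m \<le> \<phi> (t, x)" if t: "\<bar>t\<bar> < min d e" and x: "x \<in> K" for t x
  proof -
    have "(t, x) \<in> ?Q" "(0, x) \<in> ?Q" using t x \<open>e > 0\<close> by auto
    moreover have "dist (t, x) (0, x) < d" using t by (simp add: dist_Pair_Pair dist_real_def)
    ultimately have "dist (\<phi> (t, x)) (\<phi> (0, x)) < m" using d by blast
    moreover have "\<phi> (0, xm) \<le> \<phi> (0, x)" using xm(2)[OF x] .
    ultimately show ?thesis unfolding m_def dist_real_def by linarith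
  qed
  moreover have "min d e > 0" using \<open>d > 0\<close> \<open>e > 0\<close> by simp
  ultimately show ?thesis using \<open>m > 0\<close> by blast
qed

lemma tilde_disc_subset_disc2:
  fixes f1 f2 :: "real \<Rightarrow> real \<Rightarrow> real \<Rightarrow> real"
  assumes "e > 0"
    and an: "\<forall>t a b. \<bar>t\<bar> < e \<and> a\<^sup>2 + b\<^sup>2 < (r0 + e)\<^sup>2 \<longrightarrow> analytic_at (t, a, b) f1 \<and> analytic_at (t, a, b) f2"
    and iso: "{(a, b). f1 0 a b = 0 \<and> f2 0 a b = 0} \<inter> disc2 r0 = {(0, 0)}"
    and "r0 > 0" "\<epsilon> > 0"
  shows "\<exists>\<delta>0>0. \<exists>\<tau>>0. \<forall>\<delta> t. 0 < \<delta> \<and> \<delta> < \<delta>0 \<and> \<bar>t\<bar> < \<tau> \<longrightarrow> tilde_disc f1 f2 r0 \<delta> t \<subseteq> disc2 \<epsilon>"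
proof -
  define \<phi> where "\<phi> p = (f1 (fst p) (fst (snd p)) (snd (snd p)))\<^sup>2 + (f2 (fst p) (fst (snd p)) (snd (snd p)))\<^sup>2"
    for p :: "real \<times> real \<times> real"
  define K where "K = disc2 r0 \<inter> {x::real \<times> real. \<epsilon>\<^sup>2 \<le> (fst x)\<^sup>2 + (snd x)\<^sup>2}"
  have "closed {x::real \<times> real. \<epsilon>\<^sup>2 \<le> (fst x)\<^sup>2 + (snd x)\<^sup>2}"
    by (simp add: closed_Collect_le continuous_intros)
  then have "compact K"
    unfolding K_def compact_eq_bounded_closed
    by (intro conjI closed_Int closed_disc2 bounded_subset[OF bounded_disc2]) auto
  moreover have "continuous_on ({-e/2..e/2} \<times> K) \<phi>"
  proof (rule continuous_at_imp_continuous_on, rule ballI)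
    fix p assume "p \<in> {-e/2..e/2} \<times> K"
    then obtain t a b where p: "p = (t, a, b)" "\<bar>t\<bar> < e" "a\<^sup>2 + b\<^sup>2 \<le> r0\<^sup>2"
      using \<open>e > 0\<close> by (cases p) (auto simp: K_def disc2_def)
    have "r0\<^sup>2 < (r0 + e)\<^sup>2" using \<open>r0 > 0\<close> \<open>e > 0\<close> by (simp add: power_strict_mono)
    then have "analytic_at (t, a, b) f1" "analytic_at (t, a, b) f2" using an p by auto
    then show "isCont \<phi> p"
      unfolding \<phi>_def p(1) by (intro continuous_intros analytic_at_isCont)
  qed
  moreover have "\<phi> (0, x) > 0" if "x \<in> K" for x
  proof -
    obtain a b where x: "x = (a, b)" "(a, b) \<in> disc2 r0" "\<epsilon>\<^sup>2 \<le> a\<^sup>2 + b\<^sup>2"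
      using \<open>x \<in> K\<close> by (cases x) (auto simp: K_def)
    then have "(a, b) \<noteq> (0, 0)" using \<open>\<epsilon> > 0\<close> by auto
    then have "\<not> (f1 0 a b = 0 \<and> f2 0 a b = 0)" using iso x(2) by blast
    then show ?thesis using x(1) by (simp add: \<phi>_def sum_power2_gt_zero_iff)
  qed
  ultimately obtain m \<tau> where "m > 0" "\<tau> > 0"
    and bound: "\<And>t x. \<bar>t\<bar> < \<tau> \<Longrightarrow> x \<in> K \<Longrightarrow> m \<le> \<phi> (t, x)"
    using compact_lower_bound_near_zero_slice[of K "e/2" \<phi>] \<open>e > 0\<close> by auto
  have "tilde_disc f1 f2 r0 \<delta> t \<subseteq> disc2 \<epsilon>" if "0 < \<delta>" "\<delta> < sqrt m" "\<bar>t\<bar> < \<tau>" for \<delta> t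
  proof
    fix x assume "x \<in> tilde_disc f1 f2 r0 \<delta> t"
    then obtain a b where x: "x = (a, b)" "(a, b) \<in> disc2 r0" "\<phi> (t, a, b) \<le> \<delta>\<^sup>2"
      by (cases x) (auto simp: tilde_disc_def disc2_def \<phi>_def)
    have "\<delta>\<^sup>2 < (sqrt m)\<^sup>2" using that by (intro power_strict_mono) auto
    then have "\<delta>\<^sup>2 < m" using \<open>m > 0\<close> by simp
    then have "a\<^sup>2 + b\<^sup>2 < \<epsilon>\<^sup>2" using bound[OF that(3), of "(a, b)"] x by (force simp: K_def)
    then show "x \<in> disc2 \<epsilon>" using x(1) by (simp add: disc2_def)
  qed
  then show ?thesis using \<open>m > 0\<close> \<open>\<tau> > 0\<close> by (intro exI[of _ "sqrt m"] exI[of _ \<tau>]) auto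
qed


section \<open>Fold and cusp points of a plane map\<close>

lemma fold_or_cusp_point:
  fixes g1 g2 :: "real \<Rightarrow> real \<Rightarrow> real"
  defines "J \<equiv> jac2 g1 g2"
  assumes "J a b = 0"
    and nondeg: "\<not> (jac2 g1 J a b = 0 \<and> jac2 g2 J a b = 0 \<and>
              jac2 (jac2 g1 J) J a b = 0 \<and> jac2 (jac2 g2 J) J a b = 0)"
  shows "fold_point g1 g2 (a, b) \<or> cusp_point g1 g2 (a, b)"
    and "cusp_point g1 g2 (a, b) \<longleftrightarrow> jac2 g1 J a b = 0 \<and> jac2 g2 J a b = 0"
proof -
  have "(dx1 J a b, dx2 J a b) \<noteq> (0, 0)"
    using nondeg by (auto simp: jac2_def)
  then show "fold_point g1 g2 (a, b) \<or> cusp_point g1 g2 (a, b)"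
    and "cusp_point g1 g2 (a, b) \<longleftrightarrow> jac2 g1 J a b = 0 \<and> jac2 g2 J a b = 0"
    using assms unfolding fold_point_def cusp_point_def Let_def by auto
qed

definition ideal_I_gens :: "(real \<Rightarrow> real \<Rightarrow> real) \<Rightarrow> (real \<Rightarrow> real \<Rightarrow> real) \<Rightarrow> (real \<Rightarrow> real \<Rightarrow> real) list" where
  "ideal_I_gens g1 g2 = (let J = jac2 g1 g2 in [J, jac2 g1 J, jac2 g2 J])"

definition ideal_I'_gens :: "(real \<Rightarrow> real \<Rightarrow> real) \<Rightarrow> (real \<Rightarrow> real \<Rightarrow> real) \<Rightarrow> (real \<Rightarrow> real \<Rightarrow> real) list" where
  "ideal_I'_gens g1 g2 = (let J = jac2 g1 g2 in
     [J, jac2 g1 J, jac2 g2 J, jac2 (jac2 g1 J) J, jac2 (jac2 g2 J) J])"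

lemma critical_set_fold_cusp:
  fixes g1 g2 :: "real \<Rightarrow> real \<Rightarrow> real"
  defines "J \<equiv> jac2 g1 g2"
  assumes g1: "double_powser_on R g1" and g2: "double_powser_on R g2"
    and S: "S \<subseteq> disc2 \<epsilon>" "\<bar>\<epsilon>\<bar> < R"
    and I': "\<And>a b. \<bar>a\<bar> < R \<Longrightarrow> \<bar>b\<bar> < R \<Longrightarrow> \<not> (\<forall>g\<in>set (ideal_I'_gens g1 g2). g a b = 0)"
    and I: "\<And>a b. \<bar>a\<bar> < R \<Longrightarrow> \<bar>b\<bar> < R \<Longrightarrow> (a, b) \<in> \<Sigma> \<longleftrightarrow> (\<forall>g\<in>set (ideal_I_gens g1 g2). g a b = 0)"
  shows "\<forall>p\<in>critical_set g1 g2 S. fold_point g1 g2 p \<or> cusp_point g1 g2 p"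
    and "{p \<in> critical_set g1 g2 S. cusp_point g1 g2 p} = S \<inter> \<Sigma>"
    and "finite (S \<inter> \<Sigma>)"
proof -
  have nondeg: "\<not> (J a b = 0 \<and> jac2 g1 J a b = 0 \<and> jac2 g2 J a b = 0 \<and>
      jac2 (jac2 g1 J) J a b = 0 \<and> jac2 (jac2 g2 J) J a b = 0)" if "\<bar>a\<bar> < R" "\<bar>b\<bar> < R" for a b
    using I'[OF that] by (simp add: ideal_I'_gens_def J_def Let_def)
  have \<Sigma>: "(a, b) \<in> \<Sigma> \<longleftrightarrow> J a b = 0 \<and> jac2 g1 J a b = 0 \<and> jac2 g2 J a b = 0"
    if "\<bar>a\<bar> < R" "\<bar>b\<bar> < R" for a b
    using I[OF that] by (simp add: ideal_I_gens_def J_def Let_def)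
  have in_square: "\<bar>a\<bar> < R" "\<bar>b\<bar> < R" if "(a, b) \<in> S" for a b
    using that S disc2_subset_square by fastforce+
  show "\<forall>p\<in>critical_set g1 g2 S. fold_point g1 g2 p \<or> cusp_point g1 g2 p"
  proof
    fix p assume "p \<in> critical_set g1 g2 S"
    then obtain a b where "p = (a, b)" "(a, b) \<in> S" "J a b = 0"
      by (cases p) (auto simp: critical_set_def J_def)
    then show "fold_point g1 g2 p \<or> cusp_point g1 g2 p"
      using fold_or_cusp_point(1)[of g1 g2] nondeg[OF in_square] unfolding J_def by blast
  qed
  show "{p \<in> critical_set g1 g2 S. cusp_point g1 g2 p} = S \<inter> \<Sigma>"
  proof (rule set_eqI)
    fix p :: "real \<times> real"
    obtain a b where p: "p = (a, b)" by (cases p)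
    have "cusp_point g1 g2 (a, b) \<longleftrightarrow> jac2 g1 J a b = 0 \<and> jac2 g2 J a b = 0"
      if "(a, b) \<in> S" "J a b = 0"
      using fold_or_cusp_point(2)[of g1 g2] nondeg[OF in_square[OF that(1)]] that(2) unfolding J_def by blast
    then show "p \<in> {p \<in> critical_set g1 g2 S. cusp_point g1 g2 p} \<longleftrightarrow> p \<in> S \<inter> \<Sigma>"
      using \<Sigma>[OF in_square] p by (auto simp: critical_set_def J_def)
  qed
  have smooth: "Ck_on k R J" "Ck_on k R (jac2 g1 J)" "Ck_on k R (jac2 g2 J)" for k
    using double_powser_on_imp_Ck_on[OF g1] double_powser_on_imp_Ck_on[OF g2]
    unfolding J_def by (blast intro: Ck_on_jac2)+
  have "S \<inter> \<Sigma> \<subseteq> {(a, b) \<in> disc2 \<epsilon>. J a b = 0 \<and> jac2 g1 J a b = 0 \<and> jac2 g2 J a b = 0}"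
    using S(1) \<Sigma>[OF in_square] by auto
  moreover have "finite {(a, b) \<in> disc2 \<epsilon>. J a b = 0 \<and> jac2 g1 J a b = 0 \<and> jac2 g2 J a b = 0}"
    using smooth S(2) nondeg by (intro finite_nondegenerate_common_zeros) blast+
  ultimately show "finite (S \<inter> \<Sigma>)" by (rule finite_subset)
qed


theorem lemma6p3:
  fixes f1 f2 :: "real \<Rightarrow> real \<Rightarrow> real \<Rightarrow> real"
    and r0 :: real
    and W :: "(real \<times> real \<times> real) set"
  assumes an1: "analytic0 f1" and an2: "analytic0 f2"
    and f0: "f1 0 0 0 = 0" "f2 0 0 0 = 0"
    and fin_f: "finite_codim [tcoord, f1, f2]"
    and fin_F: "finite_codim [tcoord, jacx f1 (jacx f1 f2), jacx f2 (jacx f1 f2)]"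
    and J0: "jacx f1 f2 0 0 0 = 0"
    and fin_dJ: "finite_codim [tcoord, dxt1 (jacx f1 f2), dxt2 (jacx f1 f2)]"
    and VI': "zero_set_is_origin [jacx f1 f2, jacx f1 (jacx f1 f2), jacx f2 (jacx f1 f2),
               jacx (jacx f1 (jacx f1 f2)) (jacx f1 f2), jacx (jacx f2 (jacx f1 f2)) (jacx f1 f2)]"
    and r0: "r0 > 0"
    and rep_dom: "\<exists>e>0. \<forall>t a b. \<bar>t\<bar> < e \<and> a\<^sup>2 + b\<^sup>2 < (r0 + e)\<^sup>2 \<longrightarrow>
                    analytic_at (t, a, b) f1 \<and> analytic_at (t, a, b) f2"
    and r0_iso: "{(a, b). f1 0 a b = 0 \<and> f2 0 a b = 0} \<inter> disc2 r0 = {(0, 0)}"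
    and W: "zero_set_rep [jacx f1 f2, jacx f1 (jacx f1 f2), jacx f2 (jacx f1 f2)] W"
  shows "\<exists>\<delta>0>0. \<forall>\<delta>. 0 < \<delta> \<and> \<delta> < \<delta>0 \<longrightarrow>
          (\<exists>\<tau>>0. \<forall>t. t \<noteq> 0 \<and> \<bar>t\<bar> < \<tau> \<longrightarrow>
            (let Dt = tilde_disc f1 f2 r0 \<delta> t;
                 C = critical_set (f1 t) (f2 t) Dt;
                 \<Sigma> = {(a, b) \<in> Dt. (t, a, b) \<in> W}
             in (\<forall>p\<in>C. fold_point (f1 t) (f2 t) p \<or> cusp_point (f1 t) (f2 t) p) \<and>
                {p \<in> C. cusp_point (f1 t) (f2 t) p} = \<Sigma> \<and>
                finite \<Sigma>))"
proof -
  define P where "P t a b \<longleftrightarrow>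
      ((\<forall>g\<in>set (ideal_I'_gens (f1 t) (f2 t)). g a b = 0) \<longleftrightarrow> t = 0 \<and> a = 0 \<and> b = 0) \<and>
      ((t, a, b) \<in> W \<longleftrightarrow> (\<forall>g\<in>set (ideal_I_gens (f1 t) (f2 t)). g a b = 0))" for t a b
  have "near0 P"
    using near0_conj[OF VI'[unfolded zero_set_is_origin_def] W[unfolded zero_set_rep_def]]
    by (simp add: P_def[abs_def] ideal_I_gens_def ideal_I'_gens_def jacx_def Let_def)
  then obtain R where "R > 0" and R: "\<forall>t. \<bar>t\<bar> < R \<longrightarrow> double_powser_on R (f1 t) \<and>
      double_powser_on R (f2 t) \<and> (\<forall>a b. \<bar>a\<bar> < R \<and> \<bar>b\<bar> < R \<longrightarrow> P t a b)"
    using analytic0_slices_common_radius[OF an1 an2] by blast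
  obtain e where "e > 0" and an: "\<forall>t a b. \<bar>t\<bar> < e \<and> a\<^sup>2 + b\<^sup>2 < (r0 + e)\<^sup>2 \<longrightarrow>
      analytic_at (t, a, b) f1 \<and> analytic_at (t, a, b) f2"
    using rep_dom by blast
  obtain \<delta>0 \<tau> where "\<delta>0 > 0" "\<tau> > 0" and small: "\<And>\<delta> t. 0 < \<delta> \<Longrightarrow> \<delta> < \<delta>0 \<Longrightarrow> \<bar>t\<bar> < \<tau> \<Longrightarrow>
      tilde_disc f1 f2 r0 \<delta> t \<subseteq> disc2 (R/2)"
    using tilde_disc_subset_disc2[OF \<open>e > 0\<close> an r0_iso r0, of "R/2"] \<open>R > 0\<close> by auto
  have "let Dt = tilde_disc f1 f2 r0 \<delta> t; C = critical_set (f1 t) (f2 t) Dt; \<Sigma> = {(a, b) \<in> Dt. (t, a, b) \<in> W}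
      in (\<forall>p\<in>C. fold_point (f1 t) (f2 t) p \<or> cusp_point (f1 t) (f2 t) p) \<and>
         {p \<in> C. cusp_point (f1 t) (f2 t) p} = \<Sigma> \<and> finite \<Sigma>"
    if "0 < \<delta>" "\<delta> < \<delta>0" "t \<noteq> 0" "\<bar>t\<bar> < min \<tau> R" for \<delta> t
  proof -
    have t: "\<bar>t\<bar> < R" "\<bar>t\<bar> < \<tau>" using that(4) by auto
    then have slices: "double_powser_on R (f1 t)" "double_powser_on R (f2 t)"
      and germ: "\<And>a b. \<bar>a\<bar> < R \<Longrightarrow> \<bar>b\<bar> < R \<Longrightarrow> P t a b" using R by blast+
    have "{(a, b) \<in> tilde_disc f1 f2 r0 \<delta> t. (t, a, b) \<in> W} = tilde_disc f1 f2 r0 \<delta> t \<inter> {(a, b). (t, a, b) \<in> W}"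
      by auto
    moreover note critical_set_fold_cusp[OF slices small[OF that(1,2) t(2)] _ _ _, of "{(a, b). (t, a, b) \<in> W}"]
    ultimately show ?thesis using germ \<open>t \<noteq> 0\<close> \<open>R > 0\<close> unfolding P_def Let_def by simp
  qed
  then show ?thesis using \<open>\<delta>0 > 0\<close> \<open>\<tau> > 0\<close> \<open>R > 0\<close> by (intro exI[of _ \<delta>0]) (auto intro!: exI[of _ "min \<tau> R"])
qed

end
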